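(* Let $r\ge 1$ be an integer. For every nonnegative integer $n$, the number of overpartitions of $n$ in which every non-overlined part is greater than $r$ and has the same parity as $r+1$ (overlined parts being unrestricted apart from being distinct) equals the number of partitions of $n$ whose mex sequence has length at least $r$.
   Context: A partition of $n$ is a finite non-increasing sequence of positive integers (parts) summing to $n$ (the empty partition is the unique partition of $0$). For a partition $\lambda$, $\mathrm{mex}(\lambda)$ is the least positive integer that is not a part of $\lambda$. The mex sequence of $\lambda$ is the longest sequence of consecutive integers $\mathrm{mex}(\lambda), \mathrm{mex}(\lambda)+1, \dots$ none of which is a part of $\lambda$; its length is a positive integer or infinite (e.g. $(4)$ has mex sequence $(1,2,3)$, $(9,4,4,3,1)$ has mex sequence $(2)$, and $(4,3,3,3,2,1,1)$ has infinite mex sequence $(5,6,7,\dots)$); an infinite length counts as at least $r$. An overpartition of $n$ is a partition of $n$ in which the first occurrence of each part size may be overlined; equivalently, a pair $(\lambda,\mu)$ with $\lambda$ a partition into distinct parts (the overlined parts), $\mu$ an arbitrary partition (the non-overlined parts), and $|\lambda|+|\mu|=n$. *)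

theory Defs
  imports Main "HOL-Library.Multiset"
begin

definition partitions :: "nat \<Rightarrow> nat multiset set" where
  "partitions n = {p. (\<forall>x \<in># p. 0 < x) \<and> sum_mset p = n}"

definition mex :: "nat multiset \<Rightarrow> nat" where
  "mex p = (LEAST m. 0 < m \<and> m \<notin># p)"

text \<open>The mex sequence mex, mex+1, ... (maximal run of non-parts) has length at least r.\<close>
definition mex_seq_length_ge :: "nat \<Rightarrow> nat multiset \<Rightarrow> bool" where
  "mex_seq_length_ge r p = (\<forall>j < r. mex p + j \<notin># p)"

text \<open>Overpartitions of n as pairs (overlined parts: a finite set of distinct positive
  integers, non-overlined parts: a partition), total size n.\<close>
definition overpartitions :: "nat \<Rightarrow> (nat set \<times> nat multiset) set" where
  "overpartitions n = {(l, m). finite l \<and> (\<forall>x \<in> l. 0 < x) \<and> (\<forall>x \<in># m. 0 < x)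
                              \<and> \<Sum>l + sum_mset m = n}"

end

theory Submission
  imports Defs
begin

text \<open>
  Write O r N and P r N for the two sets of the theorem with n = N. For r \<ge> 1 both satisfy
  X r (n + r + 1) = X (r + 2) (n + r + 1) + X r n. An overpartition in O r but not in O (r + 2)
  has a non-overlined part r + 1, and deleting one copy of it is a bijection onto O r n.
  A partition in P r but not in P (r + 2) has a mex sequence of length r or r + 1; replacing one
  part mex - 1 by a part mex + r is a bijection from P r n onto these.

  The recurrence reduces everything to N \<le> r. Then no non-overlined part fits, so O r N amounts
  to the partitions of N into distinct parts, while the partitions in P r N are those whose set of
  parts is {1, ..., k} for some k. For fixed k the two kinds are conjugate; here both are counted
  by the recurrence c (k + 1) (n + k + 1) = c (k + 1) n + c k n.
\<close>

lemma member_le_sum_mset: "x \<in># (p :: nat multiset) \<Longrightarrow> x \<le> sum_mset p"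
  by (metis le_add1 multi_member_split sum_mset.add_mset)

lemma sum_mset_remove1: "(x :: nat) \<in># p \<Longrightarrow> sum_mset (p - {#x#}) = sum_mset p - x"
  by (simp add: sum_mset.remove)

lemma size_le_sum_mset: "\<forall>x \<in># p. 0 < (x :: nat) \<Longrightarrow> size p \<le> sum_mset p"
  by (induction p) auto

lemma card_le_sum_pos: "finite A \<Longrightarrow> \<forall>x \<in> A. 0 < (x :: nat) \<Longrightarrow> card A \<le> \<Sum>A"
  by (metis One_nat_def Suc_leI card_eq_sum sum_mono)

lemma subset_atLeastAtMost_Sum: "finite A \<Longrightarrow> \<forall>x \<in> A. 0 < (x :: nat) \<Longrightarrow> A \<subseteq> {1..\<Sum>A}"
  by (auto simp: Suc_le_eq intro!: member_le_sum)

lemma card_eq_card_subset_plus_diff: "finite A \<Longrightarrow> B \<subseteq> A \<Longrightarrow> card A = card B + card (A - B)"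
  using card_Int_Diff[of A B] by (simp add: Int_absorb1)

lemma finite_partitions: "finite (partitions n)"
proof (rule finite_subset)
  show "partitions n \<subseteq> (\<Union>s\<le>n. multisets_of_size {1..n} s)"
  proof
    fix p assume "p \<in> partitions n"
    then have pos: "\<forall>x \<in># p. 0 < x" and sum: "sum_mset p = n" by (auto simp: partitions_def)
    then have "size p \<le> n" using size_le_sum_mset[OF pos] by simp
    moreover have "set_mset p \<subseteq> {1..n}" using pos sum member_le_sum_mset by fastforce
    ultimately show "p \<in> (\<Union>s\<le>n. multisets_of_size {1..n} s)"
      by (auto simp: multisets_of_size_def)
  qed
qed (simp add: finite_multisets_of_size)

lemma finite_overpartitions: "finite (overpartitions n)"
proof (rule finite_subset)
  show "overpartitions n \<subseteq> Pow {1..n} \<times> (\<Union>k\<le>n. partitions k)"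
  proof
    fix x assume "x \<in> overpartitions n"
    then obtain l m where x: "x = (l, m)" and l: "finite l" "\<forall>y \<in> l. 0 < y"
      and m: "\<forall>y \<in># m. 0 < y" and sum: "\<Sum>l + sum_mset m = n"
      by (auto simp: overpartitions_def)
    from sum have "l \<subseteq> {1..n}" using subset_atLeastAtMost_Sum[OF l] by auto
    moreover from m sum have "m \<in> partitions (sum_mset m)" "sum_mset m \<le> n"
      by (auto simp: partitions_def)
    ultimately show "x \<in> Pow {1..n} \<times> (\<Union>k\<le>n. partitions k)"
      using x by blast
  qed
qed (simp add: finite_partitions)

lemma ex_pos_not_in_mset: "\<exists>m. 0 < m \<and> m \<notin># (p :: nat multiset)"
proof -
  have "Suc (sum_mset p) \<notin># p"
    using member_le_sum_mset by (metis not_less_eq_eq order_refl)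
  then show ?thesis by blast
qed

lemma mex_pos: "0 < mex p" and mex_not_in: "mex p \<notin># p"
  using LeastI_ex[OF ex_pos_not_in_mset[of p]] by (auto simp: mex_def)

lemma mex_below_in: "0 < j \<Longrightarrow> j < mex p \<Longrightarrow> j \<in># p"
  unfolding mex_def using not_less_Least by blast

lemma mex_eqI:
  assumes "0 < m" "m \<notin># p" "\<And>j. 0 < j \<Longrightarrow> j < m \<Longrightarrow> j \<in># p"
  shows "mex p = m"
  unfolding mex_def
  by (rule Least_equality) (use assms in \<open>auto simp: not_less[symmetric]\<close>)

lemma mex_seq_length_ge_mono: "r \<le> s \<Longrightarrow> mex_seq_length_ge s p \<Longrightarrow> mex_seq_length_ge r p"
  by (simp add: mex_seq_length_ge_def)

lemma mex_seq_length_ge_Suc: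
  "mex_seq_length_ge (Suc r) q \<longleftrightarrow> mex_seq_length_ge r q \<and> mex q + r \<notin># q"
  by (auto simp: mex_seq_length_ge_def less_Suc_eq)

lemma eq_by_common_recurrence:
  fixes f g :: "nat \<Rightarrow> nat \<Rightarrow> nat"
  assumes small: "\<And>r N. N \<le> r \<Longrightarrow> f r N = g r N"
    and rec_f: "\<And>r n. 1 \<le> r \<Longrightarrow> f r (n + Suc r) = f (r + 2) (n + Suc r) + f r n"
    and rec_g: "\<And>r n. 1 \<le> r \<Longrightarrow> g r (n + Suc r) = g (r + 2) (n + Suc r) + g r n"
    and "1 \<le> r"
  shows "f r N = g r N"
  using \<open>1 \<le> r\<close>
  \<comment> \<open>N + (N - r) decreases for both pairs (r + 2, N) and (r, N - r - 1) used by the recurrence.\<close>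
proof (induction "N + (N - r)" arbitrary: r N rule: less_induct)
  case less
  show ?case
  proof (cases "N \<le> r")
    case True
    then show ?thesis by (rule small)
  next
    case False
    define n where "n = N - Suc r"
    with False have N: "N = n + Suc r" by simp
    have "f (r + 2) N = g (r + 2) N" "f r n = g r n"
      using less.prems False N by (auto intro!: less.hyps)
    then show ?thesis using rec_f[OF less.prems, of n] rec_g[OF less.prems, of n] N by simp
  qed
qed

section \<open>Partitions with a long mex sequence\<close>

text \<open>For mex p = 1 the removed part 0 does not occur, so only mex p + r is added.\<close>
definition mex_shift :: "nat \<Rightarrow> nat multiset \<Rightarrow> nat multiset" where
  "mex_shift r p = p - {#mex p - 1#} + {#mex p + r#}"

text \<open>The inverse of mex_shift r on partitions whose mex sequence has length exactly r (first
  branch) or exactly r + 1 (second branch).\<close>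
definition mex_unshift :: "nat \<Rightarrow> nat multiset \<Rightarrow> nat multiset" where
  "mex_unshift r q =
     (if mex q + r \<in># q
      then q - {#mex q + r#} + (if mex q = 1 then {#} else {#mex q - 1#})
      else q - {#mex q + r + 1#} + {#mex q#})"

lemma mex_shift_keeps_mex:
  assumes "1 \<le> r" and keep: "mex p = 1 \<or> 2 \<le> count p (mex p - 1)"
  shows "mex (mex_shift r p) = mex p"
proof (rule mex_eqI)
  show "0 < mex p" by (rule mex_pos)
  show "mex p \<notin># mex_shift r p"
    using mex_not_in[of p] \<open>1 \<le> r\<close> by (auto simp: mex_shift_def dest: in_diffD)
  fix j assume "0 < j" "j < mex p"
  then show "j \<in># mex_shift r p"
    using mex_below_in[of j p] keep by (auto simp: mex_shift_def in_diff_count)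
qed

lemma mex_shift_lowers_mex:
  assumes "1 < mex p" and single: "count p (mex p - 1) < 2"
  shows "mex (mex_shift r p) = mex p - 1"
proof (rule mex_eqI)
  show "0 < mex p - 1" using \<open>1 < mex p\<close> by simp
  have "count p (mex p - 1) = 1"
    using single mex_below_in[of "mex p - 1" p] \<open>1 < mex p\<close>
    by (auto simp: less_2_cases_iff count_eq_zero_iff)
  then show "mex p - 1 \<notin># mex_shift r p"
    using \<open>1 < mex p\<close> by (auto simp: mex_shift_def in_diff_count not_in_iff)
  fix j assume "0 < j" "j < mex p - 1"
  then show "j \<in># mex_shift r p"
    using mex_below_in[of j p] by (auto simp: mex_shift_def in_diff_count)
qed

lemma pos_mex_shift: "\<forall>x \<in># p. 0 < x \<Longrightarrow> \<forall>x \<in># mex_shift r p. 0 < x"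
  using mex_pos[of p] by (auto simp: mex_shift_def dest: in_diffD)

lemma sum_mex_shift:
  assumes "\<forall>x \<in># p. 0 < x"
  shows "sum_mset (mex_shift r p) = sum_mset p + Suc r"
proof (cases "mex p = 1")
  case True
  then show ?thesis using assms by (auto simp: mex_shift_def diff_single_trivial)
next
  case False
  then have "mex p - 1 \<in># p" using mex_below_in[of "mex p - 1" p] mex_pos[of p] by simp
  then show ?thesis
    using member_le_sum_mset[of "mex p - 1" p] mex_pos[of p]
    by (simp add: mex_shift_def sum_mset_remove1)
qed

lemma mex_seq_mex_shift:
  assumes "1 \<le> r" and gap: "mex_seq_length_ge r p"
  shows "mex_seq_length_ge r (mex_shift r p)" and "\<not> mex_seq_length_ge (r + 2) (mex_shift r p)"
proof -
  have new: "mex p + r \<in># mex_shift r p" by (simp add: mex_shift_def)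
  have old: "mex p + j \<notin># mex_shift r p" if "j < r" for j
    using gap that by (auto simp: mex_shift_def mex_seq_length_ge_def dest: in_diffD)
  have "mex_seq_length_ge r (mex_shift r p) \<and> \<not> mex_seq_length_ge (r + 2) (mex_shift r p)"
  proof (cases "mex p = 1 \<or> 2 \<le> count p (mex p - 1)")
    case True
    then have "mex (mex_shift r p) = mex p" by (rule mex_shift_keeps_mex[OF \<open>1 \<le> r\<close>])
    then show ?thesis using old new unfolding mex_seq_length_ge_def by (auto intro!: exI[of _ r])
  next
    case False
    then have "1 < mex p" using mex_pos[of p] by linarith
    then have m: "mex (mex_shift r p) = mex p - 1" using False mex_shift_lowers_mex by simp
    have "mex p - 1 + j \<notin># mex_shift r p" if "j < Suc r" for j
    proof (cases j)
      case 0
      then show ?thesis using mex_not_in[of "mex_shift r p"] m by simp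
    next
      case (Suc i)
      then show ?thesis using old[of i] that \<open>1 < mex p\<close> by simp
    qed
    moreover have "mex p - 1 + (r + 1) \<in># mex_shift r p" using new \<open>1 < mex p\<close> by simp
    ultimately show ?thesis unfolding mex_seq_length_ge_def m by auto
  qed
  then show "mex_seq_length_ge r (mex_shift r p)" "\<not> mex_seq_length_ge (r + 2) (mex_shift r p)"
    by auto
qed

lemma mex_unshift_shift:
  assumes "1 \<le> r" and pos: "\<forall>x \<in># p. 0 < x" and gap: "mex_seq_length_ge r p"
  shows "mex_unshift r (mex_shift r p) = p"
proof (cases "mex p = 1 \<or> 2 \<le> count p (mex p - 1)")
  case True
  then have m: "mex (mex_shift r p) = mex p" by (rule mex_shift_keeps_mex[OF \<open>1 \<le> r\<close>])
  show ?thesis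
  proof (cases "mex p = 1")
    case True
    with pos have "0 \<notin># p" by auto
    with True m show ?thesis by (simp add: mex_unshift_def mex_shift_def diff_single_trivial)
  next
    case False
    then have "mex p - 1 \<in># p" using mex_below_in[of "mex p - 1" p] mex_pos[of p] by simp
    with False m show ?thesis by (simp add: mex_unshift_def mex_shift_def)
  qed
next
  case False
  then have "1 < mex p" using mex_pos[of p] by linarith
  then have m: "mex (mex_shift r p) = mex p - 1" using False mex_shift_lowers_mex by simp
  have "r - 1 < r" using \<open>1 \<le> r\<close> by simp
  with gap have "mex p + (r - 1) \<notin># p" unfolding mex_seq_length_ge_def by blast
  then have "mex p - 1 + r \<notin># mex_shift r p"
    using \<open>1 < mex p\<close> \<open>1 \<le> r\<close> by (auto simp: mex_shift_def dest: in_diffD)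
  moreover have "mex p - 1 \<in># p" using mex_below_in[of "mex p - 1" p] \<open>1 < mex p\<close> by simp
  ultimately show ?thesis using \<open>1 < mex p\<close> m by (simp add: mex_unshift_def mex_shift_def)
qed

lemma mex_unshift_keeps_mex:
  assumes "mex q + r \<in># q"
  shows "mex (mex_unshift r q) = mex q"
proof (rule mex_eqI)
  show "0 < mex q" by (rule mex_pos)
  show "mex q \<notin># mex_unshift r q"
    using assms mex_not_in[of q] mex_pos[of q] by (auto simp: mex_unshift_def dest: in_diffD)
  fix j assume "0 < j" "j < mex q"
  then show "j \<in># mex_unshift r q"
    using assms mex_below_in[of j q] by (auto simp: mex_unshift_def in_diff_count)
qed

lemma mex_unshift_raises_mex:
  assumes "1 \<le> r" and gap: "mex_seq_length_ge (Suc r) q"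
  shows "mex (mex_unshift r q) = Suc (mex q)"
proof (rule mex_eqI)
  have "mex q + j \<notin># q" if "j \<le> r" for j
    using gap that unfolding mex_seq_length_ge_def by auto
  then have "mex q + 1 \<notin># q" "mex q + r \<notin># q" using \<open>1 \<le> r\<close> by blast+
  then show "Suc (mex q) \<notin># mex_unshift r q"
    by (auto simp: mex_unshift_def dest: in_diffD)
  fix j assume "0 < j" "j < Suc (mex q)"
  then show "j \<in># mex_unshift r q"
    using \<open>mex q + r \<notin># q\<close> mex_below_in[of j q]
    by (cases "j = mex q") (auto simp: mex_unshift_def in_diff_count)
qed simp

lemma pos_mex_unshift: "\<forall>x \<in># q. 0 < x \<Longrightarrow> \<forall>x \<in># mex_unshift r q. 0 < x"
  using mex_pos[of q] by (auto simp: mex_unshift_def dest: in_diffD)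

lemma mex_seq_mex_unshift:
  assumes "1 \<le> r" and gap: "mex_seq_length_ge r q"
  shows "mex_seq_length_ge r (mex_unshift r q)"
proof (cases "mex q + r \<in># q")
  case True
  then have "mex (mex_unshift r q) = mex q" by (rule mex_unshift_keeps_mex)
  then show ?thesis
    using True gap mex_pos[of q] by (auto simp: mex_seq_length_ge_def mex_unshift_def dest: in_diffD)
next
  case False
  with gap have gap': "mex_seq_length_ge (Suc r) q" by (simp add: mex_seq_length_ge_Suc)
  then have "mex (mex_unshift r q) = Suc (mex q)" by (rule mex_unshift_raises_mex[OF \<open>1 \<le> r\<close>])
  moreover have "mex q + Suc j \<notin># q" if "j < r" for j
    using gap'[unfolded mex_seq_length_ge_def, rule_format, of "Suc j"] that by simp
  ultimately show ?thesis
    using False by (auto simp: mex_seq_length_ge_def mex_unshift_def dest: in_diffD)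
qed

lemma sum_mex_unshift:
  assumes "mex_seq_length_ge r q" and "\<not> mex_seq_length_ge (r + 2) q"
  shows "sum_mset (mex_unshift r q) + Suc r = sum_mset q"
proof (cases "mex q + r \<in># q")
  case True
  then show ?thesis
    using member_le_sum_mset[OF True] mex_pos[of q]
    by (auto simp: mex_unshift_def sum_mset_remove1)
next
  case False
  with assms have "mex q + Suc r \<in># q" by (simp add: mex_seq_length_ge_Suc)
  then show ?thesis
    using False member_le_sum_mset[of "mex q + Suc r" q]
    by (simp add: mex_unshift_def sum_mset_remove1)
qed

lemma mex_shift_unshift:
  assumes "1 \<le> r" and pos: "\<forall>x \<in># q. 0 < x"
    and "mex_seq_length_ge r q" and "\<not> mex_seq_length_ge (r + 2) q"
  shows "mex_shift r (mex_unshift r q) = q"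
proof (cases "mex q + r \<in># q")
  case True
  then have "mex (mex_unshift r q) = mex q" by (rule mex_unshift_keeps_mex)
  then have "mex_shift r (mex_unshift r q) = mex_unshift r q - {#mex q - 1#} + {#mex q + r#}"
    by (simp add: mex_shift_def)
  also have "\<dots> = q"
  proof (cases "mex q = 1")
    case True
    have "0 \<notin># q - {#mex q + r#}" using pos by (auto dest: in_diffD)
    then have "q - {#mex q + r#} - {#0#} = q - {#mex q + r#}" by (rule diff_single_trivial)
    with True \<open>mex q + r \<in># q\<close> show ?thesis by (simp add: mex_unshift_def)
  qed (use True in \<open>simp add: mex_unshift_def\<close>)
  finally show ?thesis .
next
  case False
  with assms have "mex_seq_length_ge (Suc r) q" "mex q + Suc r \<in># q"
    by (simp_all add: mex_seq_length_ge_Suc)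
  moreover from this have "mex (mex_unshift r q) = Suc (mex q)"
    by (intro mex_unshift_raises_mex[OF \<open>1 \<le> r\<close>])
  ultimately show ?thesis using False by (simp add: mex_shift_def mex_unshift_def)
qed

definition long_mex_partitions :: "nat \<Rightarrow> nat \<Rightarrow> nat multiset set" where
  "long_mex_partitions r n = {p \<in> partitions n. mex_seq_length_ge r p}"

lemma bij_betw_mex_shift:
  assumes "1 \<le> r"
  shows "bij_betw (mex_shift r) (long_mex_partitions r n)
           (long_mex_partitions r (n + Suc r) - long_mex_partitions (r + 2) (n + Suc r))"
proof (rule bij_betw_byWitness[where f' = "mex_unshift r"])
  show "\<forall>p \<in> long_mex_partitions r n. mex_unshift r (mex_shift r p) = p"
    using mex_unshift_shift[OF assms] by (simp add: long_mex_partitions_def partitions_def)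
  show "\<forall>q \<in> long_mex_partitions r (n + Suc r) - long_mex_partitions (r + 2) (n + Suc r).
          mex_shift r (mex_unshift r q) = q"
    using mex_shift_unshift[OF assms] by (auto simp: long_mex_partitions_def partitions_def)
  show "mex_shift r ` long_mex_partitions r n
          \<subseteq> long_mex_partitions r (n + Suc r) - long_mex_partitions (r + 2) (n + Suc r)"
    using pos_mex_shift sum_mex_shift mex_seq_mex_shift[OF assms]
    by (auto simp: long_mex_partitions_def partitions_def)
  show "mex_unshift r ` (long_mex_partitions r (n + Suc r) - long_mex_partitions (r + 2) (n + Suc r))
          \<subseteq> long_mex_partitions r n"
    using pos_mex_unshift sum_mex_unshift mex_seq_mex_unshift[OF assms]
    by (fastforce simp: long_mex_partitions_def partitions_def)
qed

lemma card_long_mex_partitions_rec: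
  assumes "1 \<le> r"
  shows "card (long_mex_partitions r (n + Suc r))
           = card (long_mex_partitions (r + 2) (n + Suc r)) + card (long_mex_partitions r n)"
proof -
  let ?N = "n + Suc r"
  have "finite (long_mex_partitions r ?N)"
    using finite_partitions by (simp add: long_mex_partitions_def)
  moreover have "long_mex_partitions (r + 2) ?N \<subseteq> long_mex_partitions r ?N"
    using mex_seq_length_ge_mono[of r "r + 2"] by (auto simp: long_mex_partitions_def)
  ultimately have "card (long_mex_partitions r ?N) = card (long_mex_partitions (r + 2) ?N)
      + card (long_mex_partitions r ?N - long_mex_partitions (r + 2) ?N)"
    by (rule card_eq_card_subset_plus_diff)
  also have "card (long_mex_partitions r ?N - long_mex_partitions (r + 2) ?N)
      = card (long_mex_partitions r n)"
    by (rule bij_betw_same_card[OF bij_betw_mex_shift[OF assms], symmetric])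
  finally show ?thesis .
qed

section \<open>Overpartitions with restricted non-overlined parts\<close>

definition restricted_overpartitions :: "nat \<Rightarrow> nat \<Rightarrow> (nat set \<times> nat multiset) set" where
  "restricted_overpartitions r n =
     {(l, m) \<in> overpartitions n. \<forall>x \<in># m. r < x \<and> even x = even (r + 1)}"

lemma restricted_overpartitions_diff:
  "restricted_overpartitions r N - restricted_overpartitions (r + 2) N
     = {(l, m) \<in> restricted_overpartitions r N. Suc r \<in># m}"
proof -
  have "r + 2 < x" if "r < x" "even x = even (r + 1)" "x \<noteq> Suc r" for x
  proof -
    from that(2) have "x \<noteq> r + 2" by auto
    with that(1,3) show ?thesis by simp
  qed
  then show ?thesis by (fastforce simp: restricted_overpartitions_def)
qed

lemma bij_betw_add_least_part:
  "bij_betw (\<lambda>(l, m). (l, add_mset (Suc r) m)) (restricted_overpartitions r n)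
     {(l, m) \<in> restricted_overpartitions r (n + Suc r). Suc r \<in># m}"
proof (rule bij_betw_byWitness[where f' = "\<lambda>(l, m). (l, m - {#Suc r#})"])
  show "(\<lambda>(l, m). (l, add_mset (Suc r) m)) ` restricted_overpartitions r n
          \<subseteq> {(l, m) \<in> restricted_overpartitions r (n + Suc r). Suc r \<in># m}"
    by (auto simp: restricted_overpartitions_def overpartitions_def)
  show "(\<lambda>(l, m). (l, m - {#Suc r#})) ` {(l, m) \<in> restricted_overpartitions r (n + Suc r). Suc r \<in># m}
          \<subseteq> restricted_overpartitions r n"
  proof clarify
    fix l m assume lm: "(l, m) \<in> restricted_overpartitions r (n + Suc r)" and "Suc r \<in># m"
    then have "Suc r + sum_mset (m - {#Suc r#}) = sum_mset m" by (simp add: sum_mset.remove)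
    moreover from lm have "finite l" "\<forall>x \<in> l. 0 < x" "\<Sum>l + sum_mset m = n + Suc r"
      and parts: "\<forall>x \<in># m. 0 < x \<and> r < x \<and> even x = even (r + 1)"
      by (auto simp: restricted_overpartitions_def overpartitions_def)
    moreover from parts have "\<forall>x \<in># m - {#Suc r#}. 0 < x \<and> r < x \<and> even x = even (r + 1)"
      by (blast dest: in_diffD)
    ultimately show "(l, m - {#Suc r#}) \<in> restricted_overpartitions r n"
      by (simp add: restricted_overpartitions_def overpartitions_def)
  qed
qed auto

lemma restricted_overpartitions_step_subset:
  "restricted_overpartitions (r + 2) N \<subseteq> restricted_overpartitions r N"
proof -
  have "r < x \<and> even x = even (r + 1)" if "r + 2 < x \<and> even x = even (r + 2 + 1)" for x :: nat
    using that by simp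
  then show ?thesis unfolding restricted_overpartitions_def by blast
qed

lemma card_restricted_overpartitions_rec:
  "card (restricted_overpartitions r (n + Suc r))
     = card (restricted_overpartitions (r + 2) (n + Suc r)) + card (restricted_overpartitions r n)"
proof -
  let ?N = "n + Suc r"
  have "finite (restricted_overpartitions r ?N)"
    by (rule finite_subset[OF _ finite_overpartitions[of ?N]])
      (auto simp: restricted_overpartitions_def)
  then have "card (restricted_overpartitions r ?N) = card (restricted_overpartitions (r + 2) ?N)
      + card (restricted_overpartitions r ?N - restricted_overpartitions (r + 2) ?N)"
    using restricted_overpartitions_step_subset by (rule card_eq_card_subset_plus_diff)
  also have "card (restricted_overpartitions r ?N - restricted_overpartitions (r + 2) ?N)
      = card (restricted_overpartitions r n)"
    unfolding restricted_overpartitions_diff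
    by (rule bij_betw_same_card[OF bij_betw_add_least_part, symmetric])
  finally show ?thesis .
qed

section \<open>Strict and gapless partitions\<close>

definition strict_partitions :: "nat \<Rightarrow> nat \<Rightarrow> nat set set" where
  "strict_partitions k n = {l. finite l \<and> card l = k \<and> (\<forall>x \<in> l. 0 < x) \<and> \<Sum>l = n}"

definition gapless_partitions :: "nat \<Rightarrow> nat \<Rightarrow> nat multiset set" where
  "gapless_partitions k n = {p \<in> partitions n. set_mset p = {1..k}}"

lemma finite_strict_partitions: "finite (strict_partitions k n)"
  by (rule finite_subset[of _ "Pow {1..n}"])
    (use subset_atLeastAtMost_Sum in \<open>auto simp: strict_partitions_def\<close>)

lemma finite_gapless_partitions: "finite (gapless_partitions k n)"
  using finite_partitions by (simp add: gapless_partitions_def)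

lemma strict_partitions_0: "strict_partitions 0 n = (if n = 0 then {{}} else {})"
  by (auto simp: strict_partitions_def)

lemma gapless_partitions_0: "gapless_partitions 0 n = (if n = 0 then {{#}} else {})"
  by (auto simp: gapless_partitions_def partitions_def)

lemma strict_partitions_empty:
  assumes "n < k"
  shows "strict_partitions k n = {}"
proof -
  have "card l \<le> n" if "l \<in> strict_partitions k n" for l
    using that card_le_sum_pos[of l] by (simp add: strict_partitions_def)
  with assms show ?thesis by (force simp: strict_partitions_def)
qed

lemma gapless_partitions_empty:
  assumes "n < k"
  shows "gapless_partitions k n = {}"
proof -
  have "k \<le> n" if "p \<in> partitions n" "set_mset p = {1..k}" for p
    using that assms member_le_sum_mset[of k p] by (simp add: partitions_def)
  with assms show ?thesis by (auto simp: gapless_partitions_def)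
qed

lemma sum_image_Suc: "finite A \<Longrightarrow> \<Sum>(Suc ` A) = \<Sum>A + card A"
  unfolding sum.reindex[OF inj_on_subset[OF inj_Suc subset_UNIV]]
  by (induction A rule: finite_induct) auto

lemma strict_partitions_Suc_image:
  "l \<in> strict_partitions k n \<Longrightarrow> Suc ` l \<in> strict_partitions k (n + k)"
  by (simp add: strict_partitions_def sum_image_Suc card_image)

lemma strict_partitions_Suc_cases:
  assumes "l' \<in> strict_partitions (Suc k) (n + Suc k)"
  obtains l where "l \<in> strict_partitions (Suc k) n" "l' = Suc ` l"
    | l where "l \<in> strict_partitions k n" "l' = insert 1 (Suc ` l)"
proof -
  have l': "finite l'" "card l' = Suc k" "\<forall>x \<in> l'. 0 < x" "\<Sum>l' = n + Suc k"
    using assms by (auto simp: strict_partitions_def)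
  define l where "l = (\<lambda>x. x - 1) ` (l' - {1})"
  have Suc_l: "Suc ` l = l' - {1}"
    using l'(3) by (force simp: l_def image_image)
  have l: "finite l" "\<forall>x \<in> l. 0 < x" "card l = card (l' - {1})"
    using l' Suc_l card_image[of Suc l] by (auto simp: l_def)
  have sum_l: "\<Sum>l + card l = \<Sum>(l' - {1})"
    using sum_image_Suc[OF l(1)] Suc_l by simp
  show thesis
  proof (cases "1 \<in> l'")
    case True
    then have "l \<in> strict_partitions k n"
      using l l' sum_l by (simp add: strict_partitions_def sum_diff1_nat)
    moreover have "l' = insert 1 (Suc ` l)" using True Suc_l by auto
    ultimately show thesis by (rule that(2))
  next
    case False
    then have "l \<in> strict_partitions (Suc k) n"
      using l l' sum_l by (simp add: strict_partitions_def)
    moreover have "l' = Suc ` l" using False Suc_l by simp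
    ultimately show thesis by (rule that(1))
  qed
qed

lemma card_strict_partitions_rec:
  "card (strict_partitions (Suc k) (n + Suc k))
     = card (strict_partitions (Suc k) n) + card (strict_partitions k n)"
proof -
  let ?add_one = "\<lambda>l. insert 1 (Suc ` l)"
  have "strict_partitions (Suc k) (n + Suc k)
          = image Suc ` strict_partitions (Suc k) n \<union> ?add_one ` strict_partitions k n"
  proof
    show "strict_partitions (Suc k) (n + Suc k)
            \<subseteq> image Suc ` strict_partitions (Suc k) n \<union> ?add_one ` strict_partitions k n"
    proof
      fix l' assume "l' \<in> strict_partitions (Suc k) (n + Suc k)"
      then show "l' \<in> image Suc ` strict_partitions (Suc k) n \<union> ?add_one ` strict_partitions k n"
        by (cases rule: strict_partitions_Suc_cases) auto
    qed
    have "?add_one l \<in> strict_partitions (Suc k) (n + Suc k)" if "l \<in> strict_partitions k n" for l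
    proof -
      have "1 \<notin> Suc ` l" using that by (auto simp: strict_partitions_def)
      with strict_partitions_Suc_image[OF that] show ?thesis by (auto simp: strict_partitions_def)
    qed
    then show "image Suc ` strict_partitions (Suc k) n \<union> ?add_one ` strict_partitions k n
                 \<subseteq> strict_partitions (Suc k) (n + Suc k)"
      using strict_partitions_Suc_image[of _ "Suc k" n] by auto
  qed
  moreover have "inj (image Suc)" by (simp add: inj_image_eq_iff inj_def)
  moreover have "inj_on ?add_one (strict_partitions k n)"
  proof (rule inj_onI)
    fix a b assume "a \<in> strict_partitions k n" "b \<in> strict_partitions k n"
    then have "1 \<notin> Suc ` a" "1 \<notin> Suc ` b" by (auto simp: strict_partitions_def)
    moreover assume "?add_one a = ?add_one b"
    ultimately have "Suc ` a = Suc ` b" by (metis insert_ident)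
    then show "a = b" by (simp add: inj_image_eq_iff)
  qed
  moreover have "image Suc ` strict_partitions (Suc k) n \<inter> ?add_one ` strict_partitions k n = {}"
    by (auto simp: strict_partitions_def image_iff)
  ultimately show ?thesis
    by (simp add: card_Un_disjoint card_image finite_strict_partitions inj_on_subset)
qed

lemma gapless_partitions_remove_largest:
  assumes "add_mset (Suc k) p \<in> gapless_partitions (Suc k) (n + Suc k)"
  shows "p \<in> gapless_partitions (Suc k) n \<union> gapless_partitions k n"
proof -
  have parts: "insert (Suc k) (set_mset p) = {1..Suc k}"
    using assms by (simp add: gapless_partitions_def)
  have "set_mset p = {1..Suc k} \<or> set_mset p = {1..k}"
  proof (cases "Suc k \<in># p")
    case True
    then show ?thesis using parts by (simp add: insert_absorb)
  next
    case False
    then have "set_mset p = insert (Suc k) (set_mset p) - {Suc k}" by simp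
    also have "\<dots> = {1..k}" unfolding parts by auto
    finally show ?thesis ..
  qed
  moreover have "p \<in> partitions n" using assms by (simp add: gapless_partitions_def partitions_def)
  ultimately show ?thesis by (auto simp: gapless_partitions_def)
qed

lemma card_gapless_partitions_rec:
  "card (gapless_partitions (Suc k) (n + Suc k))
     = card (gapless_partitions (Suc k) n) + card (gapless_partitions k n)"
proof -
  have "gapless_partitions (Suc k) (n + Suc k)
          = add_mset (Suc k) ` (gapless_partitions (Suc k) n \<union> gapless_partitions k n)"
  proof
    show "add_mset (Suc k) ` (gapless_partitions (Suc k) n \<union> gapless_partitions k n)
            \<subseteq> gapless_partitions (Suc k) (n + Suc k)"
    proof (rule image_subsetI)
      fix p assume p: "p \<in> gapless_partitions (Suc k) n \<union> gapless_partitions k n"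
      have "insert (Suc k) {1..Suc k} = {1..Suc k}" "insert (Suc k) {1..k} = {1..Suc k}"
        by auto
      with p show "add_mset (Suc k) p \<in> gapless_partitions (Suc k) (n + Suc k)"
        by (auto simp: gapless_partitions_def partitions_def)
    qed
    show "gapless_partitions (Suc k) (n + Suc k)
            \<subseteq> add_mset (Suc k) ` (gapless_partitions (Suc k) n \<union> gapless_partitions k n)"
    proof
      fix q assume q: "q \<in> gapless_partitions (Suc k) (n + Suc k)"
      then have "Suc k \<in># q" by (simp add: gapless_partitions_def)
      then obtain p where p: "q = add_mset (Suc k) p" by (rule mset_add)
      with q have "p \<in> gapless_partitions (Suc k) n \<union> gapless_partitions k n"
        using gapless_partitions_remove_largest[of k p n] by simp
      with p show "q \<in> add_mset (Suc k) ` (gapless_partitions (Suc k) n \<union> gapless_partitions k n)"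
        by (rule image_eqI)
    qed
  qed
  moreover have "gapless_partitions (Suc k) n \<inter> gapless_partitions k n = {}"
    by (auto simp: gapless_partitions_def)
  moreover have "inj (add_mset (Suc k))" by (simp add: inj_def)
  ultimately show ?thesis
    using card_image[OF inj_on_subset[OF \<open>inj (add_mset (Suc k))\<close> subset_UNIV]]
    by (simp add: card_Un_disjoint finite_gapless_partitions)
qed

lemma card_strict_partitions_eq_gapless:
  "card (strict_partitions k n) = card (gapless_partitions k n)"
proof (induction k arbitrary: n)
  case 0
  show ?case by (simp add: strict_partitions_0 gapless_partitions_0)
next
  case (Suc k)
  show ?case
  proof (induction n rule: less_induct)
    case (less n)
    show ?case
    proof (cases "n < Suc k")
      case True
      then show ?thesis by (simp add: strict_partitions_empty gapless_partitions_empty)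
    next
      case False
      define n' where "n' = n - Suc k"
      with False have n: "n = n' + Suc k" by simp
      then have "card (strict_partitions (Suc k) n') = card (gapless_partitions (Suc k) n')"
        by (intro less.IH) simp
      with Suc.IH[of n'] show ?thesis
        unfolding n card_strict_partitions_rec card_gapless_partitions_rec by simp
    qed
  qed
qed

section \<open>Sizes not exceeding r\<close>

lemma mex_gapless: "set_mset p = {1..k} \<Longrightarrow> mex p = Suc k"
  by (rule mex_eqI) auto

lemma set_mset_long_mex_small:
  assumes "p \<in> long_mex_partitions r N" and "N \<le> r"
  shows "set_mset p = {1..mex p - 1}"
proof (intro set_eqI iffI)
  fix x assume x: "x \<in># p"
  have pos: "\<forall>x \<in># p. 0 < x" and sum: "sum_mset p = N" and gap: "mex_seq_length_ge r p"
    using assms(1) by (auto simp: long_mex_partitions_def partitions_def)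
  have "x < mex p"
  proof (rule ccontr)
    assume "\<not> x < mex p"
    moreover have "x \<le> N" using x sum member_le_sum_mset by blast
    ultimately have "x - mex p < r" "x = mex p + (x - mex p)"
      using assms(2) mex_pos[of p] by auto
    with gap x show False unfolding mex_seq_length_ge_def by metis
  qed
  with x pos show "x \<in> {1..mex p - 1}" by auto
next
  fix x assume "x \<in> {1..mex p - 1}"
  then show "x \<in># p" using mex_below_in[of x p] by auto
qed

lemma card_long_mex_partitions_small:
  assumes "N \<le> r"
  shows "card (long_mex_partitions r N) = (\<Sum>k\<le>N. card (gapless_partitions k N))"
proof -
  have "long_mex_partitions r N = (\<Union>k\<le>N. gapless_partitions k N)"
  proof
    show "long_mex_partitions r N \<subseteq> (\<Union>k\<le>N. gapless_partitions k N)"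
    proof
      fix p assume p: "p \<in> long_mex_partitions r N"
      then have parts: "set_mset p = {1..mex p - 1}" using assms by (rule set_mset_long_mex_small)
      have "mex p - 1 \<le> N"
      proof (cases "mex p - 1 = 0")
        case False
        with parts have "mex p - 1 \<in># p" by simp
        with p show ?thesis
          using member_le_sum_mset by (fastforce simp: long_mex_partitions_def partitions_def)
      qed simp
      with p parts show "p \<in> (\<Union>k\<le>N. gapless_partitions k N)"
        by (auto simp: long_mex_partitions_def gapless_partitions_def)
    qed
    show "(\<Union>k\<le>N. gapless_partitions k N) \<subseteq> long_mex_partitions r N"
    proof
      fix p assume "p \<in> (\<Union>k\<le>N. gapless_partitions k N)"
      then obtain k where "p \<in> partitions N" "set_mset p = {1..k}"
        by (auto simp: gapless_partitions_def)
      moreover from this have "mex p = Suc k" by (intro mex_gapless)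
      ultimately show "p \<in> long_mex_partitions r N"
        by (simp add: long_mex_partitions_def mex_seq_length_ge_def)
    qed
  qed
  moreover have "gapless_partitions k N \<inter> gapless_partitions k' N = {}" if "k \<noteq> k'" for k k'
    using that by (auto simp: gapless_partitions_def)
  ultimately show ?thesis
    by (simp add: card_UN_disjoint finite_gapless_partitions)
qed

lemma card_restricted_overpartitions_small:
  assumes "N \<le> r"
  shows "card (restricted_overpartitions r N) = (\<Sum>k\<le>N. card (strict_partitions k N))"
proof -
  have "restricted_overpartitions r N = (\<lambda>l. (l, {#})) ` (\<Union>k\<le>N. strict_partitions k N)"
  proof
    show "restricted_overpartitions r N \<subseteq> (\<lambda>l. (l, {#})) ` (\<Union>k\<le>N. strict_partitions k N)"
    proof
      fix x assume "x \<in> restricted_overpartitions r N"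
      then obtain l m where lm: "x = (l, m)" "finite l" "\<forall>y \<in> l. 0 < y"
        "\<Sum>l + sum_mset m = N" "\<forall>y \<in># m. r < y"
        by (auto simp: restricted_overpartitions_def overpartitions_def)
      have "m = {#}"
      proof (rule ccontr)
        assume "m \<noteq> {#}"
        then obtain y where "y \<in># m" by (meson multiset_nonemptyE)
        with lm(5) member_le_sum_mset[of y m] have "r < sum_mset m" by fastforce
        with lm(4) assms show False by linarith
      qed
      moreover have "card l \<le> N" using lm card_le_sum_pos[of l] by simp
      ultimately show "x \<in> (\<lambda>l. (l, {#})) ` (\<Union>k\<le>N. strict_partitions k N)"
        using lm by (auto simp: strict_partitions_def)
    qed
    show "(\<lambda>l. (l, {#})) ` (\<Union>k\<le>N. strict_partitions k N) \<subseteq> restricted_overpartitions r N"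
      by (auto simp: strict_partitions_def restricted_overpartitions_def overpartitions_def)
  qed
  moreover have "inj (\<lambda>l :: nat set. (l, {#} :: nat multiset))" by (simp add: inj_def)
  moreover have "strict_partitions k N \<inter> strict_partitions k' N = {}" if "k \<noteq> k'" for k k'
    using that by (auto simp: strict_partitions_def)
  ultimately show ?thesis
    by (simp add: card_image inj_on_subset card_UN_disjoint finite_strict_partitions)
qed

theorem theorem2p3:
  fixes r n :: nat
  assumes "r \<ge> 1"
  shows "card {(l, m) \<in> overpartitions n. \<forall>x \<in># m. r < x \<and> even x = even (r + 1)}
       = card {p \<in> partitions n. mex_seq_length_ge r p}"
proof -
  have "card (restricted_overpartitions r n) = card (long_mex_partitions r n)"
  proof (rule eq_by_common_recurrence[where f = "\<lambda>r N. card (restricted_overpartitions r N)"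
        and g = "\<lambda>r N. card (long_mex_partitions r N)", OF _ _ _ assms])
    fix r N :: nat assume "N \<le> r"
    then show "card (restricted_overpartitions r N) = card (long_mex_partitions r N)"
      by (simp add: card_restricted_overpartitions_small card_long_mex_partitions_small
          card_strict_partitions_eq_gapless)
  qed (rule card_restricted_overpartitions_rec card_long_mex_partitions_rec; assumption)+
  then show ?thesis unfolding restricted_overpartitions_def long_mex_partitions_def .
qed

end
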